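(* Let $\varphi$ be a DBI formula, let $(\mathcal{U},\alpha)$ be a pointed action model that is privatized with respect to $\varphi$, and let $(\mathcal{M},w)$ be a pointed Kripke model. If the pointed update of $(\mathcal{M},w)$ with $(\mathcal{U},\alpha)$ is defined, then $\bigl(\mathcal{M}\odot\mathcal{U},(w,\alpha)\bigr)$ is weakly privatized with respect to $\varphi$.
   Context: Agents $\mathcal{A}=\{1,\dots,n\}$, $n>1$; language $\mathcal{L}$: $\varphi ::= p \mid \neg\varphi \mid (\varphi\wedge\varphi)\mid B_i\varphi$. Kripke model $\mathcal{M}=\langle S,R,V\rangle$ (nonempty $S$, $R_i\subseteq S\times S$, $V:\mathit{Prop}\to 2^S$), standard truth. Action model $\mathcal{U}=\langle E,Q,\mathsf{pre}\rangle$ (nonempty $E$, $Q_i\subseteq E\times E$, $\mathsf{pre}:E\to\mathcal{L}$). Frame properties are applied to models via their underlying frames $\langle S,R\rangle$, $\langle E,Q\rangle$. Pointed update of $(\mathcal{M},w)$ with $(\mathcal{U},\alpha)$, defined iff $\mathcal{M},w\vDash\mathsf{pre}(\alpha)$: with $T=\{(x,\beta)\in S\times E\mid\mathcal{M},x\vDash\mathsf{pre}(\beta)\}$, $\mathcal{M}\odot\mathcal{U}=\langle S^{\mathcal U},R^{\mathcal U},V^{\mathcal U}\rangle$ where $S^{\mathcal U}$ is the smallest subset of $T$ containing $(w,\alpha)$ closed under: $(x,\beta)\in S^{\mathcal U}$, $(u,\gamma)\in T$, $xR_iu$, $\beta Q_i\gamma$ imply $(u,\gamma)\in S^{\mathcal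 U}$; $R^{\mathcal U}_i$ relates $(x,\beta),(u,\gamma)\in S^{\mathcal U}$ iff $xR_iu$ and $\beta Q_i\gamma$; $V^{\mathcal U}(p)=\{(x,\beta)\in S^{\mathcal U}\mid x\in V(p)\}$. DBI formulas: $\varphi ::= B_i\xi \mid B_i(\xi\wedge\varphi)\mid(\varphi\wedge\varphi)\mid B_i\varphi$, $\xi$ purely propositional, $i\in\mathcal{A}$. Modal syntactic tree $\mathcal{T}_\varphi$ (out-tree, unlabeled root, other nodes labeled by modalities): $\mathcal{T}_{B_i\xi}$ is a root with one child labeled $B_i$; $\mathcal{T}_{B_i\psi}=\mathcal{T}_{B_i(\xi\wedge\psi)}$ is obtained by labeling the root of $\mathcal{T}_\psi$ with $B_i$ and making it the only child of a new root; $\mathcal{T}_{\psi\wedge\theta}$ is the disjoint union of $\mathcal{T}_\psi,\mathcal{T}_\theta$ with roots identified. $RootP(\varphi)$: paths in $\mathcal{T}_\varphi$ from the root (length $l\ge0$); $\mathsf{agSeq}(\sigma)$: the sequence of agents labeling the non-root nodes of $\sigma$ in order. Clusters: for a frame $\mathcal{F}=\langle W,R\rangle$, $w\in W$ and agent sequence $(i_1,\dots,i_l)$, $C^{i_1,\dots,i_l}_{\mathcal{F},w}=\{u\in W\mid\exists u_2,\dots,u_l:\ wR_{i_1}u_2R_{i_2}\cdots u_lR_{i_l}u\}$, $C^\varepsilon_{\mathcal{F},w}=\{w\}$. $\mathcal{A}^l_{\mathrm{nsr}}$: agent sequences of length $l$ with no two successive equal agents. $(\mathcal{F},w)$ is privatized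 w.r.t. $\varphi$ iff for every $\sigma\in RootP(\varphi)$: $C^{\mathsf{agSeq}(\sigma)}_{\mathcal{F},w}\neq\varnothing$ and $C^{\mathsf{agSeq}(\sigma)}_{\mathcal{F},w}\cap C^{s}_{\mathcal{F},w}=\varnothing$ for every $s\in\bigcup_{l\ge0}\mathcal{A}^l_{\mathrm{nsr}}\setminus\{\mathsf{agSeq}(\sigma)\}$. It is weakly privatized w.r.t. $\varphi$ iff the disjointness condition holds for every $\sigma\in RootP(\varphi)$ (without the nonemptiness requirement). *)

theory Defs
  imports Main
begin

datatype ('p, 'ag) fm =
    Prop 'p
  | Neg "('p, 'ag) fm"
  | Conj "('p, 'ag) fm" "('p, 'ag) fm"
  | Bel 'ag "('p, 'ag) fm"

fun propositional :: "('p, 'ag) fm \<Rightarrow> bool" where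
  "propositional (Prop p) = True"
| "propositional (Neg a) = propositional a"
| "propositional (Conj a b) = (propositional a \<and> propositional b)"
| "propositional (Bel i a) = False"

record ('s, 'ag, 'p) kmodel =
  St :: "'s set"
  Rel :: "'ag \<Rightarrow> ('s \<times> 's) set"
  Val :: "'p \<Rightarrow> 's set"

definition kripke :: "('s, 'ag, 'p) kmodel \<Rightarrow> bool" where
  "kripke M \<longleftrightarrow> St M \<noteq> {} \<and> (\<forall>i. Rel M i \<subseteq> St M \<times> St M) \<and> (\<forall>p. Val M p \<subseteq> St M)"

fun sat :: "('s, 'ag, 'p) kmodel \<Rightarrow> 's \<Rightarrow> ('p, 'ag) fm \<Rightarrow> bool" where
  "sat M x (Prop p) = (x \<in> Val M p)"
| "sat M x (Neg a) = (\<not> sat M x a)"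
| "sat M x (Conj a b) = (sat M x a \<and> sat M x b)"
| "sat M x (Bel i a) = (\<forall>y. (x, y) \<in> Rel M i \<longrightarrow> sat M y a)"

record ('e, 'ag, 'p) amodel =
  Ev :: "'e set"
  ARel :: "'ag \<Rightarrow> ('e \<times> 'e) set"
  pre :: "'e \<Rightarrow> ('p, 'ag) fm"

definition action_model :: "('e, 'ag, 'p) amodel \<Rightarrow> bool" where
  "action_model U \<longleftrightarrow> Ev U \<noteq> {} \<and> (\<forall>i. ARel U i \<subseteq> Ev U \<times> Ev U)"

definition upd_T :: "('s, 'ag, 'p) kmodel \<Rightarrow> ('e, 'ag, 'p) amodel \<Rightarrow> ('s \<times> 'e) set" where
  "upd_T M U = {(x, b). x \<in> St M \<and> b \<in> Ev U \<and> sat M x (pre U b)}"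

inductive_set upd_states :: "('s, 'ag, 'p) kmodel \<Rightarrow> ('e, 'ag, 'p) amodel \<Rightarrow> 's \<Rightarrow> 'e \<Rightarrow> ('s \<times> 'e) set"
  for M U w a where
  base: "(w, a) \<in> upd_T M U \<Longrightarrow> (w, a) \<in> upd_states M U w a"
| step: "(x, b) \<in> upd_states M U w a \<Longrightarrow> (u, c) \<in> upd_T M U \<Longrightarrow> (x, u) \<in> Rel M i
          \<Longrightarrow> (b, c) \<in> ARel U i \<Longrightarrow> (u, c) \<in> upd_states M U w a"

definition update :: "('s, 'ag, 'p) kmodel \<Rightarrow> 's \<Rightarrow> ('e, 'ag, 'p) amodel \<Rightarrow> 'e \<Rightarrow> ('s \<times> 'e, 'ag, 'p) kmodel" where
  "update M w U a =
     \<lparr> St = upd_states M U w a,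
       Rel = (\<lambda>i. {((x, b), (u, c)). (x, b) \<in> upd_states M U w a \<and> (u, c) \<in> upd_states M U w a
                                    \<and> (x, u) \<in> Rel M i \<and> (b, c) \<in> ARel U i}),
       Val = (\<lambda>p. {(x, b). (x, b) \<in> upd_states M U w a \<and> x \<in> Val M p}) \<rparr>"

definition update_defined :: "('s, 'ag, 'p) kmodel \<Rightarrow> 's \<Rightarrow> ('e, 'ag, 'p) amodel \<Rightarrow> 'e \<Rightarrow> bool" where
  "update_defined M w U a \<longleftrightarrow> sat M w (pre U a)"

inductive dbi :: "('p, 'ag) fm \<Rightarrow> bool" where
  "propositional x \<Longrightarrow> dbi (Bel i x)"
| "propositional x \<Longrightarrow> dbi a \<Longrightarrow> dbi (Bel i (Conj x a))"
| "dbi a \<Longrightarrow> dbi b \<Longrightarrow> dbi (Conj a b)"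
| "dbi a \<Longrightarrow> dbi (Bel i a)"

text \<open>Out-trees: the root is unlabeled; every child carries its modality label (an agent).\<close>
datatype 'ag mtree = MT "('ag \<times> 'ag mtree) list"

fun children :: "'ag mtree \<Rightarrow> ('ag \<times> 'ag mtree) list" where
  "children (MT cs) = cs"

fun mtree_of :: "('p, 'ag) fm \<Rightarrow> 'ag mtree" where
  "mtree_of (Conj a b) = MT (children (mtree_of a) @ children (mtree_of b))"
| "mtree_of (Bel i a) =
     (if propositional a then MT [(i, MT [])]
      else (case a of
              Conj x y \<Rightarrow> (if propositional x then MT [(i, mtree_of y)] else MT [(i, mtree_of a)])
            | _ \<Rightarrow> MT [(i, mtree_of a)]))"
| "mtree_of (Prop p) = MT []"
| "mtree_of (Neg a) = MT []"

inductive rootpath_seq :: "'ag mtree \<Rightarrow> 'ag list \<Rightarrow> bool" where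
  "rootpath_seq t []"
| "(i, t') \<in> set cs \<Longrightarrow> rootpath_seq t' s \<Longrightarrow> rootpath_seq (MT cs) (i # s)"

fun lpath :: "('ag \<Rightarrow> ('w \<times> 'w) set) \<Rightarrow> 'w \<Rightarrow> 'ag list \<Rightarrow> 'w \<Rightarrow> bool" where
  "lpath R w [] u = (u = w)"
| "lpath R w (i # s) u = (\<exists>v. (w, v) \<in> R i \<and> lpath R v s u)"

definition cluster :: "'w set \<Rightarrow> ('ag \<Rightarrow> ('w \<times> 'w) set) \<Rightarrow> 'w \<Rightarrow> 'ag list \<Rightarrow> 'w set" where
  "cluster W R w s = {u \<in> W. lpath R w s u}"

definition nsr :: "'ag list \<Rightarrow> bool" where
  "nsr s \<longleftrightarrow> successively (\<noteq>) s"

definition privatized :: "'w set \<Rightarrow> ('ag \<Rightarrow> ('w \<times> 'w) set) \<Rightarrow> 'w \<Rightarrow> ('p, 'ag) fm \<Rightarrow> bool" where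
  "privatized W R w \<phi> \<longleftrightarrow>
     (\<forall>\<sigma>. rootpath_seq (mtree_of \<phi>) \<sigma> \<longrightarrow>
        cluster W R w \<sigma> \<noteq> {} \<and>
        (\<forall>s. nsr s \<and> s \<noteq> \<sigma> \<longrightarrow> cluster W R w \<sigma> \<inter> cluster W R w s = {}))"

definition weakly_privatized :: "'w set \<Rightarrow> ('ag \<Rightarrow> ('w \<times> 'w) set) \<Rightarrow> 'w \<Rightarrow> ('p, 'ag) fm \<Rightarrow> bool" where
  "weakly_privatized W R w \<phi> \<longleftrightarrow>
     (\<forall>\<sigma>. rootpath_seq (mtree_of \<phi>) \<sigma> \<longrightarrow>
        (\<forall>s. nsr s \<and> s \<noteq> \<sigma> \<longrightarrow> cluster W R w \<sigma> \<inter> cluster W R w s = {}))"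

end

theory Submission
  imports Defs
begin

text \<open>The second projection (x, \<beta>) \<mapsto> \<beta> is a homomorphism from the updated frame into
  the action frame, so it maps the cluster of (w, \<alpha>) along any agent sequence s into
  the cluster of \<alpha> along s.
  A state lying in two clusters of the update therefore projects to an event lying in the
  corresponding two clusters of the action model, which privatization of (\<U>, \<alpha>) forbids.\<close>

lemma lpath_map:
  assumes "\<And>i x y. (x, y) \<in> R' i \<Longrightarrow> (f x, f y) \<in> R i"
  shows "lpath R' x s y \<Longrightarrow> lpath R (f x) s (f y)"
  by (induction s arbitrary: x) (auto intro: assms)

lemma cluster_map:
  assumes "f ` W' \<subseteq> W" and "\<And>i x y. (x, y) \<in> R' i \<Longrightarrow> (f x, f y) \<in> R i"
    and "u \<in> cluster W' R' w s"
  shows "f u \<in> cluster W R (f w) s"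
proof -
  have "f u \<in> W" and "lpath R (f w) s (f u)"
    using assms(1,3) lpath_map[of R' f R, OF assms(2)] by (auto simp: cluster_def)
  then show ?thesis
    by (simp add: cluster_def)
qed

lemma weakly_privatized_pullback:
  assumes "f ` W' \<subseteq> W" and "\<And>i x y. (x, y) \<in> R' i \<Longrightarrow> (f x, f y) \<in> R i"
    and "weakly_privatized W R (f w) \<phi>"
  shows "weakly_privatized W' R' w \<phi>"
  unfolding weakly_privatized_def
proof (intro allI impI)
  fix \<sigma> s
  assume "rootpath_seq (mtree_of \<phi>) \<sigma>" and "nsr s \<and> s \<noteq> \<sigma>"
  then have disjoint: "cluster W R (f w) \<sigma> \<inter> cluster W R (f w) s = {}"
    using assms(3) unfolding weakly_privatized_def by blast
  show "cluster W' R' w \<sigma> \<inter> cluster W' R' w s = {}"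
  proof (rule equals0I)
    fix u
    assume "u \<in> cluster W' R' w \<sigma> \<inter> cluster W' R' w s"
    then have "f u \<in> cluster W R (f w) \<sigma>" and "f u \<in> cluster W R (f w) s"
      by (simp_all add: cluster_map[OF assms(1,2)])
    with disjoint show False
      by blast
  qed
qed

lemma privatized_imp_weakly_privatized:
  "privatized W R w \<phi> \<Longrightarrow> weakly_privatized W R w \<phi>"
  unfolding privatized_def weakly_privatized_def by simp

lemma upd_states_subset_upd_T: "upd_states M U w \<alpha> \<subseteq> upd_T M U"
  by (clarify, erule upd_states.induct) auto

lemma snd_update_states: "snd ` St (update M w U \<alpha>) \<subseteq> Ev U"
  using upd_states_subset_upd_T[of M U w \<alpha>] by (auto simp: update_def upd_T_def)

lemma snd_update_rel:
  "(p, q) \<in> Rel (update M w U \<alpha>) i \<Longrightarrow> (snd p, snd q) \<in> ARel U i"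
  by (auto simp: update_def)

theorem theorem9:
  fixes \<phi> :: "('p, 'ag::finite) fm"
    and M :: "('s, 'ag, 'p) kmodel" and w :: 's
    and U :: "('e, 'ag, 'p) amodel" and \<alpha> :: 'e
  assumes "card (UNIV :: 'ag set) > 1"
    and "dbi \<phi>"
    and "action_model U" and "\<alpha> \<in> Ev U"
    and "privatized (Ev U) (ARel U) \<alpha> \<phi>"
    and "kripke M" and "w \<in> St M"
    and "update_defined M w U \<alpha>"
  shows "weakly_privatized (St (update M w U \<alpha>)) (Rel (update M w U \<alpha>)) (w, \<alpha>) \<phi>"
proof (rule weakly_privatized_pullback[where f = snd])
  show "snd ` St (update M w U \<alpha>) \<subseteq> Ev U"
    by (fact snd_update_states)
  show "(snd p, snd q) \<in> ARel U i" if "(p, q) \<in> Rel (update M w U \<alpha>) i" for i p q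
    using that by (fact snd_update_rel)
  show "weakly_privatized (Ev U) (ARel U) (snd (w, \<alpha>)) \<phi>"
    using privatized_imp_weakly_privatized[OF assms(5)] by simp
qed

end
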